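(* Let $G$ be a countable discrete group acting amenably by homeomorphisms on the Cantor space $D^{\aleph_0}=\{0,1\}^{\mathbb N}$. Then there exists a sequence of continuous maps $b^n\colon D^{\aleph_0}\to\mathbb P(G)$, each with finite image, such that for every $g\in G$, $\lim_{n\to\infty}\sup_{x\in D^{\aleph_0}}\|g b^n_x-b^n_{gx}\|_1=0$.
   Context: $\mathbb P(G)=\{b\colon G\to[0,1] : \sum_{g}b(g)=1\}\subset\ell^1(G)$ with the weak* topology and action $(gb)(h)=b(g^{-1}h)$. An action of $G$ on a compact space $X$ is amenable if there is a sequence of continuous maps $b^n\colon X\to\mathbb P(G)$ such that for every $g\in G$, $\lim_{n}\sup_{x\in X}\|g b^n_x-b^n_{gx}\|_1=0$. *)

theory Defs
  imports "HOL-Analysis.Analysis" "HOL-Algebra.Group_Action"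
begin

text \<open>Cantor space: nat => bool with the product topology of discrete bool.\<close>
type_synonym cantor = "nat \<Rightarrow> bool"

definition prob_vec :: "('g, 'b) monoid_scheme \<Rightarrow> ('g \<Rightarrow> real) \<Rightarrow> bool" where
  "prob_vec G b \<longleftrightarrow> (\<forall>g\<in>carrier G. 0 \<le> b g \<and> b g \<le> 1) \<and> (\<forall>g. g \<notin> carrier G \<longrightarrow> b g = 0)
     \<and> (b has_sum 1) (carrier G)"

text \<open>c_0(G): functions vanishing at infinity (the predual of l^1(G)).\<close>
definition c0_fun :: "('g, 'b) monoid_scheme \<Rightarrow> ('g \<Rightarrow> real) \<Rightarrow> bool" where
  "c0_fun G \<phi> \<longleftrightarrow> (\<forall>e>0. finite {g\<in>carrier G. \<bar>\<phi> g\<bar> \<ge> e})"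

text \<open>Continuity of x |-> b x into P(G) with the weak* topology sigma(l^1,c_0),
  i.e. the initial topology of the pairings with elements of c_0(G).\<close>
definition weakstar_cont_map :: "('g, 'b) monoid_scheme \<Rightarrow> ('a::topological_space \<Rightarrow> 'g \<Rightarrow> real) \<Rightarrow> bool" where
  "weakstar_cont_map G b \<longleftrightarrow> (\<forall>x. prob_vec G (b x)) \<and>
     (\<forall>\<phi>. c0_fun G \<phi> \<longrightarrow> continuous_on UNIV (\<lambda>x. \<Sum>\<^sub>\<infinity>h\<in>carrier G. b x h * \<phi> h))"

definition transl_l1_dist :: "('g, 'b) monoid_scheme \<Rightarrow> 'g \<Rightarrow> ('g \<Rightarrow> real) \<Rightarrow> ('g \<Rightarrow> real) \<Rightarrow> real" where
  "transl_l1_dist G g b c = (\<Sum>\<^sub>\<infinity>h\<in>carrier G. \<bar>b (inv\<^bsub>G\<^esub> g \<otimes>\<^bsub>G\<^esub> h) - c h\<bar>)"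

definition homeo_action :: "('g, 'b) monoid_scheme \<Rightarrow> ('g \<Rightarrow> 'a::topological_space \<Rightarrow> 'a) \<Rightarrow> bool" where
  "homeo_action G \<phi> \<longleftrightarrow> group_action G UNIV \<phi> \<and> (\<forall>g\<in>carrier G. continuous_on UNIV (\<phi> g))"

definition amenable_action :: "('g, 'b) monoid_scheme \<Rightarrow> ('g \<Rightarrow> 'a::topological_space \<Rightarrow> 'a) \<Rightarrow> bool" where
  "amenable_action G \<phi> \<longleftrightarrow> (\<exists>b :: nat \<Rightarrow> 'a \<Rightarrow> 'g \<Rightarrow> real.
     (\<forall>n. weakstar_cont_map G (b n)) \<and>
     (\<forall>g\<in>carrier G. (\<lambda>n. SUP x. transl_l1_dist G g (b n x) (b n (\<phi> g x))) \<longlonglongrightarrow> 0))"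

end

theory Submission
  imports Defs
begin

(* Start from any amenability sequence b^n : C -> P(G) on the Cantor space C.
   Weak*-continuity into P(G) upgrades to l^1-norm continuity: the coordinates of b^n are
   continuous and a probability vector is, up to a small tail, carried by finitely many
   coordinates.  By compactness of C this l^1-continuity is uniform with respect to
   cylinders: there is K_n such that points agreeing on their first K_n coordinates have
   images within 1/(n+1) in l^1.  Replacing b^n by b^n o trunc_{K_n}, where trunc_k
   resets all coordinates from k on to False, yields a weak*-continuous map (trunc_k is
   continuous) with finite image (trunc_k has finite image), and since translation by g
   is an l^1-isometry the defect  sup_x ||g b_x - b_{gx}||_1  changes by at most 2/(n+1). *)


definition l1_dist :: "'a set \<Rightarrow> ('a \<Rightarrow> real) \<Rightarrow> ('a \<Rightarrow> real) \<Rightarrow> real" where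
  "l1_dist A u v = (\<Sum>\<^sub>\<infinity>h\<in>A. \<bar>u h - v h\<bar>)"

lemma l1_dist_commute: "l1_dist A u v = l1_dist A v u"
  unfolding l1_dist_def by (simp add: abs_minus_commute)

lemma l1_dist_nonneg: "0 \<le> l1_dist A u v"
  unfolding l1_dist_def by (intro infsum_nonneg) auto

lemma summable_on_abs_diff:
  fixes u v :: "'a \<Rightarrow> real"
  assumes "u summable_on A" "v summable_on A"
  shows "(\<lambda>h. \<bar>u h - v h\<bar>) summable_on A"
proof -
  have "(\<lambda>h. u h + - v h) summable_on A"
    using assms summable_on_add summable_on_uminus by blast
  then show ?thesis
    using summable_on_iff_abs_summable_on_real[of "\<lambda>h. u h - v h" A] by simp
qed

lemma l1_dist_triangle:
  fixes u v w :: "'a \<Rightarrow> real"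
  assumes "u summable_on A" "v summable_on A" "w summable_on A"
  shows "l1_dist A u w \<le> l1_dist A u v + l1_dist A v w"
proof -
  have "l1_dist A u w \<le> (\<Sum>\<^sub>\<infinity>h\<in>A. \<bar>u h - v h\<bar> + \<bar>v h - w h\<bar>)"
    unfolding l1_dist_def
    by (intro infsum_mono summable_on_abs_diff summable_on_add assms) auto
  also have "\<dots> = l1_dist A u v + l1_dist A v w"
    unfolding l1_dist_def by (intro infsum_add summable_on_abs_diff assms)
  finally show ?thesis .
qed

lemma l1_dist_le_masses:
  fixes u v :: "'a \<Rightarrow> real"
  assumes "u summable_on A" "v summable_on A" "\<And>h. h \<in> A \<Longrightarrow> 0 \<le> u h" "\<And>h. h \<in> A \<Longrightarrow> 0 \<le> v h"
  shows "l1_dist A u v \<le> infsum u A + infsum v A"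
proof -
  have "l1_dist A u v \<le> (\<Sum>\<^sub>\<infinity>h\<in>A. u h + v h)"
    unfolding l1_dist_def using assms(3,4)
    by (intro infsum_mono summable_on_abs_diff summable_on_add assms(1,2)) (auto simp: abs_if)
  also have "\<dots> = infsum u A + infsum v A"
    by (intro infsum_add assms)
  finally show ?thesis .
qed

lemma l1_dist_le_finite_part:
  fixes u v :: "'a \<Rightarrow> real"
  assumes "u summable_on A" "v summable_on A" "\<And>h. h \<in> A \<Longrightarrow> 0 \<le> u h" "\<And>h. h \<in> A \<Longrightarrow> 0 \<le> v h"
    and F: "finite F" "F \<subseteq> A"
  shows "l1_dist A u v \<le> (\<Sum>h\<in>F. \<bar>u h - v h\<bar>) + (infsum u A - sum u F) + (infsum v A - sum v F)"
proof -
  define C where "C = A - F"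
  have A_split: "A = F \<union> C" "F \<inter> C = {}" using F by (auto simp: C_def)
  have sum_rest: "u summable_on C" "v summable_on C"
    using assms(1,2) summable_on_subset unfolding C_def by blast+
  have split: "infsum f A = sum f F + infsum f C" if "f summable_on C" for f :: "'a \<Rightarrow> real"
    unfolding A_split(1) using F(1) A_split(2) that by (subst infsum_Un_disjoint) auto
  have "l1_dist A u v = (\<Sum>h\<in>F. \<bar>u h - v h\<bar>) + l1_dist C u v"
    unfolding l1_dist_def by (intro split summable_on_abs_diff sum_rest)
  moreover have "l1_dist C u v \<le> infsum u C + infsum v C"
    using assms(3,4) by (intro l1_dist_le_masses sum_rest) (auto simp: C_def)
  moreover have "infsum u A = sum u F + infsum u C" "infsum v A = sum v F + infsum v C"
    by (intro split sum_rest)+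
  ultimately show ?thesis by linarith
qed

lemma prob_vec_facts:
  assumes "prob_vec G u"
  shows "u summable_on carrier G" "infsum u (carrier G) = 1" "\<And>h. h \<in> carrier G \<Longrightarrow> 0 \<le> u h"
  using assms unfolding prob_vec_def by (auto simp: has_sum_iff)

lemma prob_vec_l1_dist_le_concentrated:
  assumes u: "prob_vec G u" and v: "prob_vec G v" and F: "finite F" "F \<subseteq> carrier G"
    and close: "(\<Sum>h\<in>F. \<bar>u h - v h\<bar>) \<le> \<delta>" and mass: "sum v F \<ge> 1 - \<delta>"
  shows "l1_dist (carrier G) u v \<le> 4 * \<delta>"
proof -
  note pu = prob_vec_facts[OF u] and pv = prob_vec_facts[OF v]
  have "sum v F - sum u F \<le> (\<Sum>h\<in>F. \<bar>u h - v h\<bar>)"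
    unfolding sum_subtractf[symmetric] by (intro sum_mono) auto
  then have "sum u F \<ge> 1 - 2 * \<delta>" using close mass by linarith
  moreover have "l1_dist (carrier G) u v \<le> (\<Sum>h\<in>F. \<bar>u h - v h\<bar>) + (1 - sum u F) + (1 - sum v F)"
    using l1_dist_le_finite_part[OF pu(1) pv(1) pu(3) pv(3) F] pu(2) pv(2) by simp
  ultimately show ?thesis using close mass by linarith
qed


text \<open>Left translation of a function on G: (g.u)(h) = u(g^{-1} h).  It is a reindexing by a
  bijection of the carrier, hence preserves summability, sums and l^1 distances.\<close>
definition left_transl :: "('g, 'b) monoid_scheme \<Rightarrow> 'g \<Rightarrow> ('g \<Rightarrow> real) \<Rightarrow> 'g \<Rightarrow> real" where
  "left_transl G g u = (\<lambda>h. u (inv\<^bsub>G\<^esub> g \<otimes>\<^bsub>G\<^esub> h))"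

lemma transl_l1_dist_eq: "transl_l1_dist G g u v = l1_dist (carrier G) (left_transl G g u) v"
  unfolding transl_l1_dist_def l1_dist_def left_transl_def ..

lemma bij_betw_left_mult_inv:
  assumes "group G" "g \<in> carrier G"
  shows "bij_betw (\<lambda>h. inv\<^bsub>G\<^esub> g \<otimes>\<^bsub>G\<^esub> h) (carrier G) (carrier G)"
proof -
  interpret G: group G by fact
  show ?thesis
    by (rule bij_betw_byWitness[where f'="\<lambda>h. g \<otimes>\<^bsub>G\<^esub> h"])
       (use assms(2) in \<open>auto simp: G.m_assoc[symmetric]\<close>)
qed

lemma left_transl_prob_vec:
  assumes "group G" "g \<in> carrier G" "prob_vec G u"
  shows "left_transl G g u summable_on carrier G" "infsum (left_transl G g u) (carrier G) = 1"
    and "\<And>h. h \<in> carrier G \<Longrightarrow> 0 \<le> left_transl G g u h"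
proof -
  note bij = bij_betw_left_mult_inv[OF assms(1,2)]
  show "left_transl G g u summable_on carrier G" "infsum (left_transl G g u) (carrier G) = 1"
    using summable_on_reindex_bij_betw[OF bij, of u] infsum_reindex_bij_betw[OF bij, of u]
      prob_vec_facts[OF assms(3)] unfolding left_transl_def by auto
  show "0 \<le> left_transl G g u h" if "h \<in> carrier G" for h
    using bij_betw_apply[OF bij that] prob_vec_facts(3)[OF assms(3)]
    unfolding left_transl_def by blast
qed

lemma l1_dist_left_transl:
  assumes "group G" "g \<in> carrier G"
  shows "l1_dist (carrier G) (left_transl G g u) (left_transl G g v) = l1_dist (carrier G) u v"
  using infsum_reindex_bij_betw[OF bij_betw_left_mult_inv[OF assms], of "\<lambda>h. \<bar>u h - v h\<bar>"]
  unfolding l1_dist_def left_transl_def by simp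

lemma transl_l1_dist_bounds:
  assumes "group G" "g \<in> carrier G" "prob_vec G u" "prob_vec G v"
  shows "0 \<le> transl_l1_dist G g u v" "transl_l1_dist G g u v \<le> 2"
proof -
  note tu = left_transl_prob_vec[OF assms(1-3)] and pv = prob_vec_facts[OF assms(4)]
  show "0 \<le> transl_l1_dist G g u v" by (simp add: transl_l1_dist_eq l1_dist_nonneg)
  show "transl_l1_dist G g u v \<le> 2"
    using l1_dist_le_masses[OF tu(1) pv(1) tu(3) pv(3)] tu(2) pv(2)
    by (simp add: transl_l1_dist_eq)
qed

lemma transl_l1_dist_perturb:
  assumes grp: "group G" "g \<in> carrier G"
    and "prob_vec G u" "prob_vec G u'" "prob_vec G v" "prob_vec G v'"
  shows "transl_l1_dist G g u' v' \<le>
      transl_l1_dist G g u v + l1_dist (carrier G) u' u + l1_dist (carrier G) v v'"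
proof -
  note tu = left_transl_prob_vec[OF grp assms(3)] and tu' = left_transl_prob_vec[OF grp assms(4)]
  note pv = prob_vec_facts[OF assms(5)] and pv' = prob_vec_facts[OF assms(6)]
  let ?T = "left_transl G g"
  have "l1_dist (carrier G) (?T u') v' \<le> l1_dist (carrier G) (?T u') (?T u) + l1_dist (carrier G) (?T u) v'"
    by (intro l1_dist_triangle tu(1) tu'(1) pv'(1))
  also have "l1_dist (carrier G) (?T u) v' \<le> l1_dist (carrier G) (?T u) v + l1_dist (carrier G) v v'"
    by (intro l1_dist_triangle tu(1) pv(1) pv'(1))
  finally show ?thesis
    by (simp add: transl_l1_dist_eq l1_dist_left_transl[OF grp])
qed

lemma sup_transl_l1_dist_perturb:
  fixes u u' :: "'a \<Rightarrow> 'g \<Rightarrow> real" and \<psi> :: "'a \<Rightarrow> 'a"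
  assumes grp: "group G" "g \<in> carrier G"
    and pu: "\<And>x. prob_vec G (u x)" and pu': "\<And>x. prob_vec G (u' x)"
    and close: "\<And>x. l1_dist (carrier G) (u' x) (u x) \<le> \<epsilon>"
  shows "(SUP x. transl_l1_dist G g (u' x) (u' (\<psi> x))) \<le> (SUP x. transl_l1_dist G g (u x) (u (\<psi> x))) + 2 * \<epsilon>"
proof (rule cSUP_least)
  fix x
  have "bdd_above (range (\<lambda>x. transl_l1_dist G g (u x) (u (\<psi> x))))"
    using transl_l1_dist_bounds(2)[OF grp pu pu] by (intro bdd_aboveI2)
  then have "transl_l1_dist G g (u x) (u (\<psi> x)) \<le> (SUP x. transl_l1_dist G g (u x) (u (\<psi> x)))"
    by (rule cSUP_upper[rotated]) simp
  moreover have "l1_dist (carrier G) (u (\<psi> x)) (u' (\<psi> x)) \<le> \<epsilon>"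
    using close[of "\<psi> x"] by (simp add: l1_dist_commute)
  ultimately show "transl_l1_dist G g (u' x) (u' (\<psi> x)) \<le> (SUP x. transl_l1_dist G g (u x) (u (\<psi> x))) + 2 * \<epsilon>"
    using transl_l1_dist_perturb[OF grp pu[of x] pu'[of x] pu[of "\<psi> x"] pu'[of "\<psi> x"]] close[of x]
    by linarith
qed simp

lemma sup_transl_l1_dist_nonneg:
  assumes grp: "group G" "g \<in> carrier G" and pu: "\<And>x. prob_vec G (u x)"
  shows "0 \<le> (SUP x. transl_l1_dist G g (u x) (u (\<psi> x)))"
proof -
  have "bdd_above (range (\<lambda>x. transl_l1_dist G g (u x) (u (\<psi> x))))"
    using transl_l1_dist_bounds(2)[OF grp pu pu] by (intro bdd_aboveI2)
  then have "transl_l1_dist G g (u x) (u (\<psi> x)) \<le> (SUP x. transl_l1_dist G g (u x) (u (\<psi> x)))" for x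
    by (rule cSUP_upper[rotated]) simp
  then show ?thesis
    using transl_l1_dist_bounds(1)[OF grp pu pu] order_trans by blast
qed

lemma sup_transl_l1_dist_tendsto_perturb:
  fixes b b' :: "nat \<Rightarrow> 'a \<Rightarrow> 'g \<Rightarrow> real" and \<psi> :: "'a \<Rightarrow> 'a"
  assumes grp: "group G" "g \<in> carrier G"
    and pb: "\<And>n x. prob_vec G (b n x)" and pb': "\<And>n x. prob_vec G (b' n x)"
    and close: "\<And>n x. l1_dist (carrier G) (b' n x) (b n x) \<le> \<epsilon> n" and \<epsilon>: "\<epsilon> \<longlonglongrightarrow> 0"
    and lim: "(\<lambda>n. SUP x. transl_l1_dist G g (b n x) (b n (\<psi> x))) \<longlonglongrightarrow> 0"
  shows "(\<lambda>n. SUP x. transl_l1_dist G g (b' n x) (b' n (\<psi> x))) \<longlonglongrightarrow> 0"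
proof -
  have upper: "(SUP x. transl_l1_dist G g (b' n x) (b' n (\<psi> x)))
      \<le> (SUP x. transl_l1_dist G g (b n x) (b n (\<psi> x))) + 2 * \<epsilon> n" for n
    by (intro sup_transl_l1_dist_perturb[OF grp] pb pb' close)
  have lower: "0 \<le> (SUP x. transl_l1_dist G g (b' n x) (b' n (\<psi> x)))" for n
    by (intro sup_transl_l1_dist_nonneg[OF grp] pb')
  have upper_lim: "(\<lambda>n. (SUP x. transl_l1_dist G g (b n x) (b n (\<psi> x))) + 2 * \<epsilon> n) \<longlonglongrightarrow> 0"
    using tendsto_add[OF lim tendsto_mult_left[OF \<epsilon>, of 2]] by simp
  show ?thesis
    by (rule real_tendsto_sandwich[OF _ _ tendsto_const upper_lim]) (use lower upper in simp_all)
qed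


text \<open>Each coordinate of a weak*-continuous map is continuous (pair with an indicator in c_0).\<close>
lemma weakstar_cont_map_coordinate:
  assumes wc: "weakstar_cont_map G b" and h: "h \<in> carrier G"
  shows "continuous_on UNIV (\<lambda>x. b x h)"
proof -
  define \<delta> where "\<delta> = (\<lambda>h'. if h' = h then 1 else (0::real))"
  have "{g\<in>carrier G. \<bar>\<delta> g\<bar> \<ge> e} \<subseteq> {h}" if "e > 0" for e
    using that by (auto simp: \<delta>_def)
  then have "c0_fun G \<delta>"
    unfolding c0_fun_def by (meson finite.emptyI finite_insert finite_subset)
  then have cont: "continuous_on UNIV (\<lambda>x. \<Sum>\<^sub>\<infinity>h'\<in>carrier G. b x h' * \<delta> h')"
    using wc unfolding weakstar_cont_map_def by blast
  have "(\<Sum>\<^sub>\<infinity>h'\<in>carrier G. b x h' * \<delta> h') = (\<Sum>\<^sub>\<infinity>h'\<in>{h}. b x h' * \<delta> h')" for x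
    using h by (intro infsum_cong_neutral) (auto simp: \<delta>_def)
  then show ?thesis
    using cont by (simp add: \<delta>_def)
qed

lemma weakstar_cont_map_l1_continuous:
  fixes b :: "'a::topological_space \<Rightarrow> 'g \<Rightarrow> real"
  assumes wc: "weakstar_cont_map G b" and e: "e > 0"
  shows "\<forall>\<^sub>F y in nhds x. l1_dist (carrier G) (b y) (b x) < e"
proof -
  define \<delta> where "\<delta> = e / 5"
  have \<delta>: "\<delta> > 0" using e by (simp add: \<delta>_def)
  have pb: "\<And>z. prob_vec G (b z)" using wc unfolding weakstar_cont_map_def by blast
  note px = prob_vec_facts[OF pb[of x]]
  obtain F where F: "finite F" "F \<subseteq> carrier G" and
      "dist (sum (b x) F) (infsum (b x) (carrier G)) \<le> \<delta>"
    using infsum_finite_approximation[OF px(1) \<delta>] by blast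
  then have mass: "sum (b x) F \<ge> 1 - \<delta>"
    using px(2) by (simp add: dist_real_def abs_le_iff)
  define d where "d = \<delta> / (real (card F) + 1)"
  have d: "d > 0" and card_d: "real (card F) * d \<le> \<delta>"
    using \<delta> by (auto simp: d_def field_simps)
  have "\<forall>\<^sub>F y in nhds x. \<bar>b y h - b x h\<bar> < d" if "h \<in> F" for h
  proof -
    have "continuous_on UNIV (\<lambda>z. b z h)"
      using weakstar_cont_map_coordinate[OF wc] F(2) that by blast
    then have "(\<lambda>z. b z h) \<midarrow>x\<rightarrow> b x h"
      unfolding continuous_on_def by simp
    then have "((\<lambda>z. b z h) \<longlongrightarrow> b x h) (nhds x)"
      using tendsto_at_iff_tendsto_nhds[of "\<lambda>z. b z h" x] by simp
    then show ?thesis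
      using d by (auto dest: tendstoD simp: dist_real_def)
  qed
  then have "\<forall>\<^sub>F y in nhds x. \<forall>h\<in>F. \<bar>b y h - b x h\<bar> < d"
    using F(1) by (simp add: eventually_ball_finite)
  then show ?thesis
  proof (rule eventually_mono)
    fix y assume "\<forall>h\<in>F. \<bar>b y h - b x h\<bar> < d"
    then have "(\<Sum>h\<in>F. \<bar>b y h - b x h\<bar>) \<le> \<delta>"
      using sum_bounded_above[of F "\<lambda>h. \<bar>b y h - b x h\<bar>" d] card_d by fastforce
    then have "l1_dist (carrier G) (b y) (b x) \<le> 4 * \<delta>"
      by (intro prob_vec_l1_dist_le_concentrated[OF pb pb F] mass)
    then show "l1_dist (carrier G) (b y) (b x) < e"
      using \<delta> by (simp add: \<delta>_def)
  qed
qed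

lemma weakstar_cont_map_compose:
  assumes "weakstar_cont_map G b" "continuous_on UNIV f"
  shows "weakstar_cont_map G (b \<circ> f)"
  using assms unfolding weakstar_cont_map_def
  by (auto intro: continuous_on_compose2[OF _ assms(2)])


lemma eventually_nhds_cylinder:
  fixes x :: "nat \<Rightarrow> 'c::topological_space"
  assumes "\<forall>\<^sub>F y in nhds x. P y"
  shows "\<exists>k. \<forall>y. (\<forall>i<k. y i = x i) \<longrightarrow> P y"
proof -
  obtain U where U: "open U" "x \<in> U" "\<And>y. y \<in> U \<Longrightarrow> P y"
    using assms unfolding eventually_nhds by blast
  have "openin (product_topology (\<lambda>i. euclidean) UNIV) U"
    using U(1) unfolding open_fun_def by auto
  from product_topology_open_contains_basis[OF this U(2)]
  obtain X where X: "x \<in> (\<Pi>\<^sub>E i\<in>UNIV. X i)" "finite {i. X i \<noteq> UNIV}" "(\<Pi>\<^sub>E i\<in>UNIV. X i) \<subseteq> U"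
    by auto
  define k where "k = Suc (Max {i. X i \<noteq> UNIV})"
  have "y \<in> U" if agree: "\<forall>i<k. y i = x i" for y
  proof -
    have "y i \<in> X i" for i
    proof (cases "X i = UNIV")
      case False
      then have "i < k" using X(2) by (auto simp: k_def le_imp_less_Suc)
      then show ?thesis using agree X(1) by auto
    qed simp
    then show ?thesis using X(3) by auto
  qed
  then show ?thesis using U(3) by blast
qed

lemma open_cylinder:
  fixes x :: "nat \<Rightarrow> 'c::discrete_topology"
  shows "open {y. \<forall>i<k. y i = x i}"
proof -
  have "open {y. \<forall>i\<in>{..<k}. y (id i) \<in> {x i}}"
    by (rule product_topology_basis') (auto simp: open_discrete)
  then show ?thesis by (simp add: Ball_def)
qed

lemma compact_sequence_space: "compact (UNIV :: (nat \<Rightarrow> 'c::{finite, discrete_topology}) set)"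
proof -
  have "compact_space (product_topology (\<lambda>i::nat. (euclidean :: 'c topology)) UNIV)"
    unfolding compact_space_product_topology
    by (simp add: compact_space_def finite_imp_compact)
  then show ?thesis
    by (simp add: euclidean_product_topology compact_space_def compactin_euclidean_iff)
qed

lemma weakstar_cont_map_uniform_cylinder:
  fixes b :: "(nat \<Rightarrow> 'c::{finite, discrete_topology}) \<Rightarrow> 'g \<Rightarrow> real"
  assumes wc: "weakstar_cont_map G b" and e: "e > 0"
  shows "\<exists>K. \<forall>y z. (\<forall>i<K. y i = z i) \<longrightarrow> l1_dist (carrier G) (b y) (b z) \<le> e"
proof -
  have pb: "\<And>z. prob_vec G (b z)" using wc unfolding weakstar_cont_map_def by blast
  have "\<forall>x. \<exists>k. \<forall>y. (\<forall>i<k. y i = x i) \<longrightarrow> l1_dist (carrier G) (b y) (b x) < e / 2"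
    using weakstar_cont_map_l1_continuous[OF wc, of "e / 2"] e
    by (intro allI eventually_nhds_cylinder) simp
  then obtain k where "\<forall>x y. (\<forall>i<k x. y i = x i) \<longrightarrow> l1_dist (carrier G) (b y) (b x) < e / 2"
    by (auto dest: choice)
  then have k: "\<And>x y. \<forall>i<k x. y i = x i \<Longrightarrow> l1_dist (carrier G) (b y) (b x) < e / 2"
    by blast
  define C where "C x = {y. \<forall>i<k x. y i = x i}" for x
  obtain X where X: "finite X" "UNIV \<subseteq> (\<Union>x\<in>X. C x)"
    using compactE_image[OF compact_sequence_space, of UNIV C] by (auto simp: C_def open_cylinder)
  define K where "K = Max (k ` X)"
  have "l1_dist (carrier G) (b y) (b z) \<le> e" if agree: "\<forall>i<K. y i = z i" for y z
  proof -
    obtain x where x: "x \<in> X" "\<forall>i<k x. y i = x i" using X(2) by (auto simp: C_def)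
    have "k x \<le> K" using X(1) x(1) by (simp add: K_def)
    then have "\<forall>i<k x. z i = x i" using agree x(2) by auto
    then have "l1_dist (carrier G) (b x) (b z) < e / 2"
      using k[of x z] by (simp add: l1_dist_commute)
    moreover have "l1_dist (carrier G) (b y) (b x) < e / 2" using k[OF x(2)] .
    moreover have "l1_dist (carrier G) (b y) (b z) \<le> l1_dist (carrier G) (b y) (b x) + l1_dist (carrier G) (b x) (b z)"
      using prob_vec_facts(1)[OF pb] by (intro l1_dist_triangle)
    ultimately show ?thesis by linarith
  qed
  then show ?thesis by blast
qed


definition trunc :: "nat \<Rightarrow> cantor \<Rightarrow> cantor" where
  "trunc k x = (\<lambda>i. if i < k then x i else False)"

lemma trunc_agrees: "\<forall>i<k. trunc k x i = x i"
  by (simp add: trunc_def)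

lemma continuous_on_trunc: "continuous_on UNIV (trunc k)"
proof (rule continuous_on_coordinatewise_then_product)
  show "continuous_on UNIV (\<lambda>x. trunc k x i)" for i
    by (cases "i < k") (simp_all add: trunc_def)
qed

lemma finite_range_trunc: "finite (range (trunc k))"
proof -
  have "trunc k x = (\<lambda>S i. i \<in> S) {i. i < k \<and> x i}" "{i. i < k \<and> x i} \<in> Pow {..<k}" for x
    by (auto simp: trunc_def)
  then have "range (trunc k) \<subseteq> (\<lambda>S i. i \<in> S) ` Pow {..<k}"
    by blast
  then show ?thesis by (rule finite_subset) auto
qed


theorem lemma3p3p5:
  fixes G :: "('g, 'b) monoid_scheme" and \<phi> :: "'g \<Rightarrow> cantor \<Rightarrow> cantor"
  assumes "group G" and "countable (carrier G)"
    and "homeo_action G \<phi>" and "amenable_action G \<phi>"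
  shows "\<exists>b :: nat \<Rightarrow> cantor \<Rightarrow> 'g \<Rightarrow> real.
     (\<forall>n. weakstar_cont_map G (b n) \<and> finite (range (b n))) \<and>
     (\<forall>g\<in>carrier G. (\<lambda>n. SUP x. transl_l1_dist G g (b n x) (b n (\<phi> g x))) \<longlonglongrightarrow> 0)"
proof -
  obtain b :: "nat \<Rightarrow> cantor \<Rightarrow> 'g \<Rightarrow> real" where wc: "\<And>n. weakstar_cont_map G (b n)"
    and lim: "\<And>g. g \<in> carrier G \<Longrightarrow> (\<lambda>n. SUP x. transl_l1_dist G g (b n x) (b n (\<phi> g x))) \<longlonglongrightarrow> 0"
    using assms(4) unfolding amenable_action_def by blast
  have pb: "\<And>n x. prob_vec G (b n x)" using wc unfolding weakstar_cont_map_def by blast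
  define \<epsilon> where "\<epsilon> n = inverse (real (Suc n))" for n
  have "\<forall>n. \<exists>k. \<forall>y z. (\<forall>i<k. y i = z i) \<longrightarrow> l1_dist (carrier G) (b n y) (b n z) \<le> \<epsilon> n"
    by (intro allI weakstar_cont_map_uniform_cylinder wc) (simp add: \<epsilon>_def)
  then obtain K where "\<forall>n y z. (\<forall>i<K n. y i = z i) \<longrightarrow> l1_dist (carrier G) (b n y) (b n z) \<le> \<epsilon> n"
    by (auto dest: choice)
  then have K: "\<And>n y z. \<forall>i<K n. y i = z i \<Longrightarrow> l1_dist (carrier G) (b n y) (b n z) \<le> \<epsilon> n"
    by blast
  define b' where "b' n = b n \<circ> trunc (K n)" for n
  have "weakstar_cont_map G (b' n)" for n
    unfolding b'_def by (intro weakstar_cont_map_compose wc continuous_on_trunc)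
  moreover have "finite (range (b' n))" for n
    using finite_range_trunc[of "K n"] unfolding b'_def image_comp[symmetric] by blast
  moreover have "(\<lambda>n. SUP x. transl_l1_dist G g (b' n x) (b' n (\<phi> g x))) \<longlonglongrightarrow> 0"
    if "g \<in> carrier G" for g
  proof (rule sup_transl_l1_dist_tendsto_perturb[OF assms(1) that pb _ _ _ lim[OF that]])
    show "\<And>n x. prob_vec G (b' n x)" unfolding b'_def by (simp add: pb)
    show "\<And>n x. l1_dist (carrier G) (b' n x) (b n x) \<le> \<epsilon> n"
      unfolding b'_def by (simp add: K trunc_agrees)
    show "\<epsilon> \<longlonglongrightarrow> 0" unfolding \<epsilon>_def by (rule LIMSEQ_inverse_real_of_nat)
  qed
  ultimately show ?thesis by blast
qed

end
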